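(* On the Euler graph, under the symmetric measure $\mu$, the vertex process satisfies $V_n\to\infty$ and $|n|-V_n\to\infty$ almost surely as $n\to-\infty$.
   Context: The Euler graph has, at each level $n\le0$, vertices labelled $0,\dots,|n|$; vertex $v$ at level $n$ is connected to vertex $v$ at level $n-1$ by $v+1$ edges and to vertex $v+1$ at level $n-1$ by $|n|+1-v$ edges (so $|n|+2$ edges down from $v$). A random path is a sequence of connected edges starting from the single vertex at level 0; $V_n$ is its vertex at level $n$. The symmetric measure $\mu$ is the law of the random path in which, for each $n\le0$, given the path from level $0$ down to level $n$, the next edge (between levels $n$ and $n-1$) is uniformly distributed among the $|n|+2$ edges joining $V_n$ to level $n-1$. Equivalently $(V_n)$ is Markov with $\mathbb P(V_{n-1}=v\mid V_n=v)=\frac{v+1}{|n|+2}$ and $\mathbb P(V_{n-1}=v+1\mid V_n=v)=\frac{|n|+1-v}{|n|+2}$. *)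

theory Defs
  imports "HOL-Probability.Probability"
begin

text \<open>Levels n \<le> 0 are indexed by k = |n| :: nat, so V k stands for V_{-k}.
  euler_step k v w is the probability of going from vertex v at level -k to
  vertex w at level -(k+1) under the symmetric measure.\<close>
definition euler_step :: "nat \<Rightarrow> nat \<Rightarrow> nat \<Rightarrow> real" where
  "euler_step k v w =
     (if w = v then (real v + 1) / (real k + 2)
      else if w = v + 1 then (real k + 1 - real v) / (real k + 2)
      else 0)"

definition euler_path_prob :: "nat \<Rightarrow> (nat \<Rightarrow> nat) \<Rightarrow> real" where
  "euler_path_prob k vs =
     (if vs 0 = 0 then 1 else 0) * (\<Prod>i<k. euler_step i (vs i) (vs (Suc i)))"

end

theory Submission
  imports Defs "HOL-Real_Asymp.Real_Asymp"
begin

text \<open>Almost surely every step of the vertex process is 0 or 1, so both \<open>V k\<close> and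
  \<open>k - V k\<close> are nondecreasing, and it suffices that both are unbounded. From a vertex
  \<open>v \<ge> m\<close> at level \<open>k\<close> the walk can end up in \<open>{..m}\<close> only by staying at \<open>v = m\<close>,
  which has probability \<open>(m + 1) / (k + 2)\<close>; hence
  \<open>P(V (k+1) \<le> m) \<le> P(V k < m) + (m + 1) / (k + 2)\<close>, and induction on \<open>m\<close> gives
  \<open>P(V k \<le> m) \<to> 0\<close>, so \<open>V\<close> is unbounded almost surely. The reflection \<open>v \<mapsto> k - v\<close>
  is a symmetry of the Euler graph, so \<open>k - V k\<close> has the same law as \<open>V k\<close>.\<close>

lemma measure_bind_pmf: "measure (bind_pmf M N) X = (\<integral>x. measure (N x) X \<partial>measure_pmf M)"
  unfolding measure_pmf_bind
  by (subst measure_pmf.measure_bind[where N="count_space UNIV"]) (auto simp: measure_pmf_in_subprob_space)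

lemma map_pmf_Not_bernoulli_pmf:
  assumes "0 \<le> p" "p \<le> 1"
  shows "map_pmf Not (bernoulli_pmf p) = bernoulli_pmf (1 - p)"
proof (rule pmf_eqI)
  fix b
  have "pmf (map_pmf Not (bernoulli_pmf p)) (\<not> \<not> b) = pmf (bernoulli_pmf p) (\<not> b)"
    by (rule pmf_map_inj') (auto intro: injI)
  then show "pmf (map_pmf Not (bernoulli_pmf p)) b = pmf (bernoulli_pmf (1 - p)) b"
    using assms by (cases b) simp_all
qed

lemma (in finite_measure) AE_ex_not_in_if_measure_tendsto_0:
  assumes sets: "\<And>k. A k \<in> sets M" and lim: "(\<lambda>k. measure M (A k)) \<longlonglongrightarrow> 0"
  shows "AE x in M. \<exists>k. x \<notin> A k"
proof (rule AE_I)
  show "(\<Inter>k. A k) \<in> sets M"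
    using sets by blast
  have "measure M (\<Inter>k. A k) \<le> 0"
    using sets by (intro LIMSEQ_le_const[OF lim] exI allI impI finite_measure_mono) auto
  then show "emeasure M (\<Inter>k. A k) = 0"
    by (simp add: emeasure_eq_measure measure_le_0_iff)
  show "{x \<in> space M. \<not> (\<exists>k. x \<notin> A k)} \<subseteq> (\<Inter>k. A k)"
    by blast
qed

lemma incseq_unbounded_imp_filterlim_at_top:
  fixes f :: "nat \<Rightarrow> 'a::linorder"
  assumes "incseq f" and "\<And>z. \<exists>k. z \<le> f k"
  shows "filterlim f at_top sequentially"
  unfolding filterlim_at_top eventually_sequentially
  using assms by (meson incseqD order_trans)

lemma euler_path_prob_Suc:
  "euler_path_prob (Suc k) vs = euler_path_prob k vs * euler_step k (vs k) (vs (Suc k))"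
  unfolding euler_path_prob_def by simp

lemma euler_path_prob_cong:
  "(\<And>i. i \<le> k \<Longrightarrow> vs i = ws i) \<Longrightarrow> euler_path_prob k vs = euler_path_prob k ws"
  unfolding euler_path_prob_def by (auto intro!: prod.cong)

definition euler_step_pmf :: "nat \<Rightarrow> nat \<Rightarrow> nat pmf" where
  "euler_step_pmf k v =
     map_pmf (\<lambda>b. if b then Suc v else v) (bernoulli_pmf ((real k + 1 - real v) / (real k + 2)))"

lemma set_euler_step_pmf: "set_pmf (euler_step_pmf k v) \<subseteq> {v, Suc v}"
  unfolding euler_step_pmf_def by auto

lemma pmf_euler_step_pmf:
  assumes "v \<le> Suc k"
  shows "pmf (euler_step_pmf k v) w = euler_step k v w"
proof -
  define p where "p = (real k + 1 - real v) / (real k + 2)"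
  have p: "0 \<le> p" "p \<le> 1"
    using assms by (auto simp: p_def field_simps)
  have "pmf (euler_step_pmf k v) w = measure (bernoulli_pmf p) {b. (if b then Suc v else v) = w}"
    by (simp add: euler_step_pmf_def pmf_map p_def vimage_def)
  also have "\<dots> = euler_step k v w"
  proof -
    consider "w = v" | "w = Suc v" | "w \<noteq> v" "w \<noteq> Suc v" by blast
    then show ?thesis
    proof cases
      case 1
      then have "{b. (if b then Suc v else v) = w} = {False}" by auto
      then show ?thesis using p 1 by (simp add: measure_pmf_single euler_step_def p_def field_simps)
    next
      case 2
      then have "{b. (if b then Suc v else v) = w} = {True}" by auto
      then show ?thesis using p 2 by (simp add: measure_pmf_single euler_step_def p_def)
    next
      case 3
      then have "{b. (if b then Suc v else v) = w} = {}" by auto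
      then show ?thesis using 3 by (simp add: euler_step_def)
    qed
  qed
  finally show ?thesis .
qed

lemma euler_step_pmf_reflect:
  assumes "v \<le> k"
  shows "map_pmf (\<lambda>w. Suc k - w) (euler_step_pmf k v) = euler_step_pmf k (k - v)"
proof -
  define p where "p = (real k + 1 - real v) / (real k + 2)"
  have p: "0 \<le> p" "p \<le> 1" and flip: "1 - p = (real k + 1 - real (k - v)) / (real k + 2)"
    using assms by (auto simp: p_def field_simps of_nat_diff)
  have "map_pmf (\<lambda>w. Suc k - w) (euler_step_pmf k v)
      = map_pmf (\<lambda>b. if b then Suc (k - v) else k - v) (map_pmf Not (bernoulli_pmf p))"
    using assms unfolding euler_step_pmf_def p_def map_pmf_comp
    by (intro map_pmf_cong) auto
  also have "\<dots> = euler_step_pmf k (k - v)"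
    by (simp add: map_pmf_Not_bernoulli_pmf[OF p] flip euler_step_pmf_def)
  finally show ?thesis .
qed

fun euler_path_pmf :: "nat \<Rightarrow> nat list pmf" where
  "euler_path_pmf 0 = return_pmf [0]"
| "euler_path_pmf (Suc k) =
     euler_path_pmf k \<bind> (\<lambda>xs. map_pmf (\<lambda>w. xs @ [w]) (euler_step_pmf k (last xs)))"

definition euler_vertex_pmf :: "nat \<Rightarrow> nat pmf" where
  "euler_vertex_pmf k = map_pmf last (euler_path_pmf k)"

lemma euler_vertex_pmf_Suc: "euler_vertex_pmf (Suc k) = euler_vertex_pmf k \<bind> euler_step_pmf k"
  unfolding euler_vertex_pmf_def by (simp add: map_bind_pmf map_pmf_comp bind_map_pmf)

lemma set_euler_vertex_pmf: "set_pmf (euler_vertex_pmf k) \<subseteq> {..k}"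
proof (induction k)
  case 0
  then show ?case by (simp add: euler_vertex_pmf_def)
next
  case (Suc k)
  then show ?case
    using set_euler_step_pmf by (fastforce simp: euler_vertex_pmf_Suc)
qed

lemma euler_vertex_pmf_reflect: "map_pmf (\<lambda>v. k - v) (euler_vertex_pmf k) = euler_vertex_pmf k"
proof (induction k)
  case 0
  then show ?case by (simp add: euler_vertex_pmf_def)
next
  case (Suc k)
  have "map_pmf (\<lambda>w. Suc k - w) (euler_vertex_pmf (Suc k))
      = euler_vertex_pmf k \<bind> (\<lambda>v. euler_step_pmf k (k - v))"
    unfolding euler_vertex_pmf_Suc map_bind_pmf
    using set_euler_vertex_pmf by (intro bind_pmf_cong refl euler_step_pmf_reflect) blast
  also have "\<dots> = map_pmf (\<lambda>v. k - v) (euler_vertex_pmf k) \<bind> euler_step_pmf k"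
    by (simp add: bind_map_pmf)
  finally show ?case
    by (simp add: Suc.IH euler_vertex_pmf_Suc)
qed

lemma length_of_set_euler_path_pmf: "xs \<in> set_pmf (euler_path_pmf k) \<Longrightarrow> length xs = Suc k"
  by (induction k arbitrary: xs) auto

lemma euler_step_of_set_euler_path_pmf:
  assumes "xs \<in> set_pmf (euler_path_pmf (Suc i))"
  shows "xs ! Suc i \<in> {xs ! i, Suc (xs ! i)}"
proof -
  obtain ys w where ys: "ys \<in> set_pmf (euler_path_pmf i)"
    and w: "w \<in> set_pmf (euler_step_pmf i (last ys))" and xs: "xs = ys @ [w]"
    using assms by auto
  have "length ys = Suc i"
    using ys by (rule length_of_set_euler_path_pmf)
  then have "last ys = xs ! i" "w = xs ! Suc i"
    by (auto simp: xs nth_append last_conv_nth simp flip: length_greater_0_conv)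
  then show ?thesis
    using w set_euler_step_pmf by fastforce
qed

lemma pmf_euler_path_pmf_snoc:
  "pmf (euler_path_pmf (Suc k)) (xs @ [w])
     = pmf (euler_path_pmf k) xs * pmf (euler_step_pmf k (last xs)) w"
proof -
  have "pmf (map_pmf (\<lambda>w. ys @ [w]) (euler_step_pmf k (last ys))) (xs @ [w])
      = (if ys = xs then pmf (euler_step_pmf k (last xs)) w else 0)" for ys
  proof (cases "ys = xs")
    case True
    have "pmf (map_pmf (\<lambda>w. xs @ [w]) (euler_step_pmf k (last xs))) (xs @ [w])
        = pmf (euler_step_pmf k (last xs)) w"
      by (rule pmf_map_inj') (simp add: inj_def)
    then show ?thesis
      using True by simp
  qed (auto simp: pmf_eq_0_set_pmf)
  then have "pmf (euler_path_pmf (Suc k)) (xs @ [w])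
      = (\<integral>ys. (if ys = xs then pmf (euler_step_pmf k (last xs)) w else 0) \<partial>euler_path_pmf k)"
    by (simp add: pmf_bind)
  also have "\<dots> = pmf (euler_path_pmf k) xs * pmf (euler_step_pmf k (last xs)) w"
    by (subst integral_measure_pmf_real[where A="{xs}"]) (auto split: if_splits)
  finally show ?thesis .
qed

lemma pmf_euler_path_pmf:
  "pmf (euler_path_pmf k) xs = (if length xs = Suc k then euler_path_prob k ((!) xs) else 0)"
proof (induction k arbitrary: xs)
  case 0
  show ?case
    by (cases xs rule: rev_exhaust) (auto simp: euler_path_prob_def indicator_def)
next
  case (Suc k)
  show ?case
  proof (cases "length xs = Suc (Suc k)")
    case False
    then show ?thesis
      using length_of_set_euler_path_pmf by (auto simp: pmf_eq_0_set_pmf)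
  next
    case True
    then obtain ys w where xs: "xs = ys @ [w]" and ys: "length ys = Suc k"
      by (cases xs rule: rev_exhaust) auto
    have snoc: "pmf (euler_path_pmf (Suc k)) xs
        = pmf (euler_path_pmf k) ys * pmf (euler_step_pmf k (last ys)) w"
      unfolding xs by (rule pmf_euler_path_pmf_snoc)
    have "euler_path_prob k ((!) xs) = euler_path_prob k ((!) ys)"
      using ys by (intro euler_path_prob_cong) (simp add: xs nth_append)
    then have path_prob: "euler_path_prob (Suc k) ((!) xs)
        = pmf (euler_path_pmf k) ys * euler_step k (last ys) w"
      using Suc.IH[of ys] ys
      by (simp add: euler_path_prob_Suc xs nth_append last_conv_nth flip: length_greater_0_conv)
    show ?thesis
    proof (cases "ys \<in> set_pmf (euler_path_pmf k)")
      case False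
      then show ?thesis
        using True snoc path_prob by (simp add: set_pmf_iff)
    next
      case True
      then have "last ys \<le> k"
        using set_euler_vertex_pmf unfolding euler_vertex_pmf_def by fastforce
      then show ?thesis
        using \<open>length xs = Suc (Suc k)\<close> snoc path_prob by (simp add: pmf_euler_step_pmf)
    qed
  qed
qed

lemma measure_euler_step_pmf_atMost:
  assumes "v \<le> k"
  shows "measure (euler_step_pmf k v) {..m} \<le> indicator {..<m} v + (real m + 1) / (real k + 2)"
proof (cases "v < m")
  case True
  have "measure (euler_step_pmf k v) {..m} \<le> 1"
    by (rule measure_pmf.prob_le_1)
  then show ?thesis
    using True by (simp add: add_increasing2)
next
  case False
  have "measure (euler_step_pmf k v) {..m}
      = measure (euler_step_pmf k v) ({..m} \<inter> set_pmf (euler_step_pmf k v))"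
    by (rule measure_Int_set_pmf[symmetric])
  also have "\<dots> \<le> measure (euler_step_pmf k v) {m}"
    using False set_euler_step_pmf[of k v] by (intro measure_pmf.finite_measure_mono) auto
  also have "\<dots> = euler_step k v m"
    using assms by (simp add: measure_pmf_single pmf_euler_step_pmf)
  also have "\<dots> \<le> (real m + 1) / (real k + 2)"
    using False by (auto simp: euler_step_def)
  finally show ?thesis
    using False by simp
qed

lemma measure_euler_vertex_pmf_Suc_atMost:
  "measure (euler_vertex_pmf (Suc k)) {..m}
     \<le> measure (euler_vertex_pmf k) {..<m} + (real m + 1) / (real k + 2)"
proof -
  let ?c = "(real m + 1) / (real k + 2)"
  have "measure (euler_vertex_pmf (Suc k)) {..m}
      = (\<integral>v. measure (euler_step_pmf k v) {..m} \<partial>euler_vertex_pmf k)"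
    by (simp add: euler_vertex_pmf_Suc measure_bind_pmf)
  also have "\<dots> \<le> (\<integral>v. indicator {..<m} v + ?c \<partial>euler_vertex_pmf k)"
  proof (rule integral_mono_AE)
    show "integrable (euler_vertex_pmf k) (\<lambda>v. measure (euler_step_pmf k v) {..m})"
      by (rule measure_pmf.integrable_const_bound[where B=1]) auto
    show "integrable (euler_vertex_pmf k) (\<lambda>v. indicator {..<m} v + ?c)"
      by (rule measure_pmf.integrable_const_bound[where B="1 + ?c"]) (auto simp: indicator_def)
    show "AE v in euler_vertex_pmf k. measure (euler_step_pmf k v) {..m} \<le> indicator {..<m} v + ?c"
      using set_euler_vertex_pmf by (auto simp: AE_measure_pmf_iff intro!: measure_euler_step_pmf_atMost)
  qed
  also have "\<dots> = measure (euler_vertex_pmf k) {..<m} + ?c"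
    by (subst Bochner_Integration.integral_add)
       (auto intro: measure_pmf.integrable_const_bound[where B=1] simp: measure_pmf.emeasure_eq_measure)
  finally show ?thesis .
qed

lemma euler_vertex_pmf_lessThan_tendsto_0:
  "(\<lambda>k. measure (euler_vertex_pmf k) {..<m}) \<longlonglongrightarrow> 0"
proof (induction m)
  case 0
  show ?case by simp
next
  case (Suc m)
  have bound: "(\<lambda>k. measure (euler_vertex_pmf k) {..<m} + (real m + 1) / (real k + 2)) \<longlonglongrightarrow> 0"
    by (rule tendsto_add_zero[OF Suc.IH]) real_asymp
  have "(\<lambda>k. measure (euler_vertex_pmf (Suc k)) {..m}) \<longlonglongrightarrow> 0"
    by (rule tendsto_sandwich[OF _ _ tendsto_const bound])
       (simp_all add: measure_euler_vertex_pmf_Suc_atMost)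
  then show ?case
    by (simp add: lessThan_Suc_atMost LIMSEQ_imp_Suc)
qed

lemma euler_vertex_pmf_near_top_tendsto_0:
  "(\<lambda>k. measure (euler_vertex_pmf k) {v. k < v + m}) \<longlonglongrightarrow> 0"
proof -
  have "measure (euler_vertex_pmf k) {v. k < v + m} = measure (euler_vertex_pmf k) {..<m}" for k
  proof -
    have "{v. k < v + m} \<inter> set_pmf (euler_vertex_pmf k)
        = (\<lambda>v. k - v) -` {..<m} \<inter> set_pmf (euler_vertex_pmf k)"
      using set_euler_vertex_pmf[of k] by auto
    then have "measure (euler_vertex_pmf k) {v. k < v + m}
        = measure (map_pmf (\<lambda>v. k - v) (euler_vertex_pmf k)) {..<m}"
      by (metis measure_Int_set_pmf measure_map_pmf)
    then show ?thesis
      by (simp only: euler_vertex_pmf_reflect)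
  qed
  then show ?thesis
    using euler_vertex_pmf_lessThan_tendsto_0 by simp
qed

locale euler_vertex_process = prob_space M for M :: "'a measure" +
  fixes V :: "nat \<Rightarrow> 'a \<Rightarrow> nat"
  assumes measurable_vertex [measurable]: "\<And>k. V k \<in> measurable M (count_space UNIV)"
    and measure_cylinder:
      "\<And>k vs. measure M {\<omega> \<in> space M. \<forall>i\<le>k. V i \<omega> = vs i} = euler_path_prob k vs"
begin

definition history :: "nat \<Rightarrow> 'a \<Rightarrow> nat list" where
  "history k \<omega> = map (\<lambda>i. V i \<omega>) [0..<Suc k]"

lemma history_eq_iff: "history k \<omega> = xs \<longleftrightarrow> length xs = Suc k \<and> (\<forall>i\<le>k. V i \<omega> = xs ! i)"
  unfolding history_def list_eq_iff_nth_eq by (auto simp del: upt_Suc simp: less_Suc_eq_le)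

lemma nth_history: "i \<le> k \<Longrightarrow> history k \<omega> ! i = V i \<omega>"
  unfolding history_def by (simp del: upt_Suc add: nth_map less_Suc_eq_le)

lemma last_history: "last (history k \<omega>) = V k \<omega>"
  unfolding history_def by (simp del: upt_Suc add: last_map)

lemma cylinder_in_sets: "{\<omega> \<in> space M. \<forall>i\<le>k. V i \<omega> = vs i} \<in> sets M"
proof -
  have "{\<omega> \<in> space M. \<forall>i\<in>{..k}. V i \<omega> = vs i} \<in> sets M"
    by (rule sets.sets_Collect_finite_All) simp_all
  then show ?thesis
    by simp
qed

lemma history_preimage:
  "history k -` {xs} \<inter> space M
     = (if length xs = Suc k then {\<omega> \<in> space M. \<forall>i\<le>k. V i \<omega> = xs ! i} else {})"
  by (rule set_eqI) (auto simp: history_eq_iff)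

lemma measurable_history [measurable]: "history k \<in> measurable M (count_space UNIV)"
  unfolding measurable_count_space_eq2_countable
  by (simp add: history_preimage cylinder_in_sets)

lemma distr_history: "distr M (count_space UNIV) (history k) = measure_pmf (euler_path_pmf k)"
proof (rule measure_eqI_countable[where A=UNIV])
  fix xs :: "nat list"
  show "emeasure (distr M (count_space UNIV) (history k)) {xs} = emeasure (euler_path_pmf k) {xs}"
    by (simp add: emeasure_distr history_preimage emeasure_eq_measure measure_cylinder
        pmf_euler_path_pmf emeasure_pmf_single)
qed auto

lemma distr_vertex: "distr M (count_space UNIV) (V k) = measure_pmf (euler_vertex_pmf k)"
proof -
  have "distr M (count_space UNIV) (V k)
      = distr (distr M (count_space UNIV) (history k)) (count_space UNIV) last"
    by (simp add: distr_distr comp_def last_history)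
  then show ?thesis
    by (simp add: distr_history euler_vertex_pmf_def map_pmf_rep_eq)
qed

lemma AE_vertex_step: "AE \<omega> in M. V (Suc i) \<omega> \<in> {V i \<omega>, Suc (V i \<omega>)}"
proof -
  have "AE xs in distr M (count_space UNIV) (history (Suc i)). xs ! Suc i \<in> {xs ! i, Suc (xs ! i)}"
    unfolding distr_history AE_measure_pmf_iff using euler_step_of_set_euler_path_pmf by blast
  then show ?thesis
    by (auto dest: AE_distrD[OF measurable_history] simp: nth_history)
qed

lemma AE_ex_vertex_not_in_if_tendsto_0:
  assumes "(\<lambda>k. measure (euler_vertex_pmf k) (A k)) \<longlonglongrightarrow> 0"
  shows "AE \<omega> in M. \<exists>k. V k \<omega> \<notin> A k"
proof -
  have "AE \<omega> in M. \<exists>k. \<omega> \<notin> V k -` A k \<inter> space M"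
    using assms
    by (intro AE_ex_not_in_if_measure_tendsto_0)
       (simp_all flip: measure_distr[OF measurable_vertex] add: distr_vertex)
  then show ?thesis
    by (auto simp: AE_space)
qed

theorem AE_vertex_tendsto_at_top:
  "AE \<omega> in M. filterlim (\<lambda>k. V k \<omega>) at_top sequentially
             \<and> filterlim (\<lambda>k. real k - real (V k \<omega>)) at_top sequentially"
proof -
  have "AE \<omega> in M. \<forall>i. V (Suc i) \<omega> \<in> {V i \<omega>, Suc (V i \<omega>)}"
    unfolding AE_all_countable using AE_vertex_step by blast
  moreover have "AE \<omega> in M. \<forall>m. \<exists>k. \<not> V k \<omega> < m"
    using AE_ex_vertex_not_in_if_tendsto_0[OF euler_vertex_pmf_lessThan_tendsto_0]
    by (simp add: AE_all_countable)
  moreover have "AE \<omega> in M. \<forall>m. \<exists>k. \<not> k < V k \<omega> + m"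
    using AE_ex_vertex_not_in_if_tendsto_0[OF euler_vertex_pmf_near_top_tendsto_0]
    by (simp add: AE_all_countable)
  ultimately show ?thesis
  proof eventually_elim
    case (elim \<omega>)
    have "V n \<omega> \<le> V (Suc n) \<omega>" "real n - real (V n \<omega>) \<le> real (Suc n) - real (V (Suc n) \<omega>)"
      for n using elim(1)[rule_format, of n] by auto
    then have "incseq (\<lambda>k. V k \<omega>)" "incseq (\<lambda>k. real k - real (V k \<omega>))"
      by (auto intro: incseq_SucI)
    moreover have "\<exists>k. z \<le> V k \<omega>" for z
      using elim by (meson not_less)
    moreover have "\<exists>k. z \<le> real k - real (V k \<omega>)" for z
    proof -
      obtain k where "V k \<omega> + nat \<lceil>z\<rceil> \<le> k"
        using elim(3) by (meson not_less)
      then have "z \<le> real k - real (V k \<omega>)"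
        by linarith
      then show ?thesis ..
    qed
    ultimately show ?case
      by (auto intro: incseq_unbounded_imp_filterlim_at_top)
  qed
qed

end

theorem lemma7p1:
  fixes M :: "'a measure" and V :: "nat \<Rightarrow> 'a \<Rightarrow> nat"
  assumes "prob_space M"
    and "\<And>k. V k \<in> measurable M (count_space UNIV)"
    and "\<And>k vs. measure M {\<omega> \<in> space M. \<forall>i\<le>k. V i \<omega> = vs i} = euler_path_prob k vs"
  shows "AE \<omega> in M. filterlim (\<lambda>k. V k \<omega>) at_top sequentially
                  \<and> filterlim (\<lambda>k. real k - real (V k \<omega>)) at_top sequentially"
proof -
  interpret euler_vertex_process M V
    using assms by (simp add: euler_vertex_process_def euler_vertex_process_axioms_def)
  show ?thesis
    by (rule AE_vertex_tendsto_at_top)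
qed

end
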